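(* Let $\Gamma$ be a simplicial complex and $r\ge 3$. Suppose $v_1,\dots,v_r$ are (not necessarily distinct) vertices of $\Gamma$ such that $\{v_i,v_{i+1}\}$ is an edge of $\Gamma$ for each $1\le i\le r$ (indices mod $r$), and suppose there is at most one index $i$ (mod $r$) such that $\{v_{i-1},v_i,v_{i+1}\}\in\Gamma$. Then $\mathrm{gr}_1(\Gamma)\le r$.
   Context: A simplicial complex $\Gamma$ on a finite vertex set $V=V(\Gamma)$ is a family of subsets of $V$ (faces) closed under taking subsets; edges are faces with 2 elements. Note $\{v_{i-1},v_i,v_{i+1}\}$ is a set, so if $v_{i-1}=v_{i+1}$ it equals the edge $\{v_i,v_{i+1}\}$. For $W\subseteq V$, $\Gamma[W]=\{F\in\Gamma:F\subseteq W\}$. For a face $F$ (possibly empty), $\mathrm{lk}_\Gamma(F)=\{G\setminus F: F\subseteq G\in\Gamma\}$. Fix a field $\mathbf{k}$; $\tilde H_i(\cdot;\mathbf{k})$ is reduced simplicial homology. The $1$-girth is $\mathrm{gr}_{1}(\Gamma)=\min\{|W|: W\subseteq V(\Gamma),\ \tilde H_{1}(\mathrm{lk}_\Gamma(F)[W];\mathbf{k})\neq 0 \text{ for some face } F\in\Gamma \text{ (including } F=\emptyset)\}$, or $\infty$ if none exists. *)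

theory Defs
  imports Main "HOL-Library.Extended_Nat"
begin

definition simplicial_complex :: "'a set \<Rightarrow> 'a set set \<Rightarrow> bool" where
  "simplicial_complex V \<Gamma> \<longleftrightarrow> finite V \<and> \<Gamma> \<subseteq> Pow V \<and>
     (\<forall>F\<in>\<Gamma>. \<forall>G. G \<subseteq> F \<longrightarrow> G \<in> \<Gamma>) \<and> (\<forall>v\<in>V. {v} \<in> \<Gamma>)"

definition induced :: "'a set set \<Rightarrow> 'a set \<Rightarrow> 'a set set" where
  "induced \<Gamma> W = {F \<in> \<Gamma>. F \<subseteq> W}"

definition link :: "'a set set \<Rightarrow> 'a set \<Rightarrow> 'a set set" where
  "link \<Gamma> F = {G - F | G. G \<in> \<Gamma> \<and> F \<subseteq> G}"

text \<open>Simplicial boundary maps with coefficients in a field, simplices oriented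
  by the linear order on vertices. A chain is a function from faces to coefficients.\<close>
definition bd1 :: "'a::linorder set set \<Rightarrow> ('a set \<Rightarrow> 'k::field) \<Rightarrow> 'a \<Rightarrow> 'k" where
  "bd1 K z x = (\<Sum>e\<in>{e\<in>K. card e = 2 \<and> x \<in> e}. (if x = Max e then 1 else -1) * z e)"

definition bd2 :: "'a::linorder set set \<Rightarrow> ('a set \<Rightarrow> 'k::field) \<Rightarrow> 'a set \<Rightarrow> 'k" where
  "bd2 K c e = (\<Sum>t\<in>{t\<in>K. card t = 3 \<and> e \<subseteq> t}.
      (-1) ^ card {y\<in>t. y < the_elem (t - e)} * c t)"

text \<open>Reduced first homology over the field 'k is nonzero iff there is a 1-cycle
  which is not a boundary (reduced and unreduced H_1 coincide).\<close>
definition H1_nonzero :: "'k::field itself \<Rightarrow> 'a::linorder set set \<Rightarrow> bool" where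
  "H1_nonzero _ K \<longleftrightarrow> (\<exists>z :: 'a set \<Rightarrow> 'k.
      (\<forall>e. z e \<noteq> 0 \<longrightarrow> e \<in> K \<and> card e = 2) \<and>
      (\<forall>x. bd1 K z x = 0) \<and>
      \<not> (\<exists>c :: 'a set \<Rightarrow> 'k. (\<forall>t. c t \<noteq> 0 \<longrightarrow> t \<in> K \<and> card t = 3) \<and>
             (\<forall>e. e \<in> K \<and> card e = 2 \<longrightarrow> bd2 K c e = z e)))"

text \<open>1-girth; the infimum of the empty set of enat is \<infinity>.\<close>
definition gr1 :: "'k::field itself \<Rightarrow> 'a::linorder set \<Rightarrow> 'a set set \<Rightarrow> enat" where
  "gr1 k V \<Gamma> = Inf {enat (card W) | W. W \<subseteq> V \<and>
      (\<exists>F\<in>\<Gamma>. H1_nonzero k (induced (link \<Gamma> F) W))}"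

end

theory Submission
  imports Defs
begin

(* Rotating the cyclic sequence v so that its only possible triangular
   corner sits at position 0 gives a closed walk u 0, ..., u r = u 0 with distinct
   consecutive vertices, all of whose corners {u (k-1), u k, u (k+1)} for 0 < k < r are
   non-faces (a "corner-free walk").  Among all corner-free walks take one of minimal
   length m <= r.  Minimality forces its vertices to be distinct (otherwise a shorter
   closed sub-walk exists) and its chords to be trivial (otherwise a shortcut, or the
   triangle spanned by the chord, yields a shorter walk or a forbidden corner).  Hence
   the first edge {u 0, u 1} lies in no triangle of the subcomplex induced on the
   walk's vertex set W.  The oriented edge cycle of the walk is a 1-cycle with non-zero
   coefficient on that edge, so it is not a boundary: H_1 of Gamma[W] is non-zero,
   and taking F = {} in the definition of the 1-girth gives gr_1 <= |W| <= m <= r. *)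

section \<open>Corner-free closed walks\<close>

definition corner_free_walk :: "'a set set \<Rightarrow> nat \<Rightarrow> (nat \<Rightarrow> 'a) \<Rightarrow> bool" where
  "corner_free_walk \<Gamma> m u \<longleftrightarrow> 3 \<le> m \<and> u m = u 0 \<and>
     (\<forall>k<m. {u k, u (Suc k)} \<in> \<Gamma> \<and> u k \<noteq> u (Suc k)) \<and>
     (\<forall>k. 0 < k \<and> k < m \<longrightarrow> {u (k - 1), u k, u (Suc k)} \<notin> \<Gamma>)"

lemma corner_free_walk_segment:
  assumes walk: "corner_free_walk \<Gamma> m u"
    and ij: "i < j" "j \<le> m" and closed: "u j = u i" and long: "3 \<le> j - i"
  shows "corner_free_walk \<Gamma> (j - i) (\<lambda>k. u (i + k))"
proof -
  have corner: "{u (i + (k - 1)), u (i + k), u (Suc (i + k))} \<notin> \<Gamma>"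
    if "0 < k" "k < j - i" for k
  proof -
    have "i + (k - 1) = i + k - 1" using that by simp
    then show ?thesis using walk that ij unfolding corner_free_walk_def by auto
  qed
  show ?thesis using walk ij closed long corner unfolding corner_free_walk_def by auto
qed

lemma corner_free_walk_shortcut:
  assumes walk: "corner_free_walk \<Gamma> m u" and ij: "Suc i < j" "j < m"
    and chord: "{u i, u j} \<in> \<Gamma>" "u i \<noteq> u j" and no_face: "{u (j - 1), u j, u i} \<notin> \<Gamma>"
  shows "corner_free_walk \<Gamma> (Suc (j - i)) (\<lambda>k. if k \<le> j - i then u (i + k) else u i)"
  (is "corner_free_walk \<Gamma> _ ?w")
proof -
  have edge: "{?w k, ?w (Suc k)} \<in> \<Gamma> \<and> ?w k \<noteq> ?w (Suc k)" if "k < Suc (j - i)" for k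
  proof (cases "k = j - i")
    case True then show ?thesis using chord ij by (auto simp: insert_commute)
  next
    case False then show ?thesis using walk that ij unfolding corner_free_walk_def by auto
  qed
  have corner: "{?w (k - 1), ?w k, ?w (Suc k)} \<notin> \<Gamma>" if "0 < k" "k < Suc (j - i)" for k
  proof (cases "k = j - i")
    case True
    then have "i + (k - 1) = j - 1" "i + k = j" "k - 1 \<le> j - i" "\<not> Suc k \<le> j - i"
      using ij that by auto
    then show ?thesis using True no_face by simp
  next
    case False
    then have "i + (k - 1) = i + k - 1" "k < m" using that ij by auto
    then show ?thesis using walk that ij False unfolding corner_free_walk_def by auto
  qed
  show ?thesis using ij edge corner unfolding corner_free_walk_def by auto
qed

section \<open>Minimal corner-free walks\<close>

definition minimal_corner_free_walk :: "'a set set \<Rightarrow> nat \<Rightarrow> (nat \<Rightarrow> 'a) \<Rightarrow> bool" where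
  "minimal_corner_free_walk \<Gamma> m u \<longleftrightarrow>
     corner_free_walk \<Gamma> m u \<and> (\<forall>m' w. corner_free_walk \<Gamma> m' w \<longrightarrow> m \<le> m')"

lemma minimal_corner_free_walk_exists:
  assumes "corner_free_walk \<Gamma> r v"
  obtains m u where "m \<le> r" "minimal_corner_free_walk \<Gamma> m u"
proof -
  define m where "m = (LEAST m. \<exists>u. corner_free_walk \<Gamma> m u)"
  obtain u where "corner_free_walk \<Gamma> m u"
    using LeastI[of "\<lambda>m. \<exists>u. corner_free_walk \<Gamma> m u"] assms unfolding m_def by blast
  moreover have "m \<le> m'" if "corner_free_walk \<Gamma> m' w" for m' w
    unfolding m_def using that by (blast intro: Least_le)
  ultimately show ?thesis using that assms unfolding minimal_corner_free_walk_def by blast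
qed

text \<open>A minimal corner-free walk visits each vertex only once: a repetition at distance
  one contradicts the edge condition, at distance two a corner, and at distance at
  least three it bounds a shorter corner-free segment.\<close>
lemma minimal_walk_distinct:
  assumes min: "minimal_corner_free_walk \<Gamma> m u" and ij: "i < j" "j < m"
  shows "u i \<noteq> u j"
proof
  assume eq: "u i = u j"
  have walk: "corner_free_walk \<Gamma> m u" using min unfolding minimal_corner_free_walk_def by simp
  consider "j = Suc i" | "j = Suc (Suc i)" | "Suc (Suc i) < j" using ij by linarith
  then show False
  proof cases
    case 1 then show False using walk eq ij unfolding corner_free_walk_def by auto
  next
    case 2
    then have "{u (Suc i - 1), u (Suc i), u (Suc (Suc i))} = {u i, u (Suc i)}" using eq by auto
    then show False using walk 2 ij unfolding corner_free_walk_def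
      by (metis Suc_lessD zero_less_Suc)
  next
    case 3
    have "corner_free_walk \<Gamma> (j - i) (\<lambda>k. u (i + k))"
      using corner_free_walk_segment[OF walk] ij eq 3 by simp
    then have "m \<le> j - i" using min unfolding minimal_corner_free_walk_def by blast
    then show False using ij by simp
  qed
qed

text \<open>By induction on j: a chord {u i, u j} must span
  a face with {u (j-1), u j} (else the shortcut is shorter), so {u i, u (j-1)} is again
  a chord, which is either a forbidden corner or excluded by induction.\<close>
lemma minimal_walk_chord:
  assumes min: "minimal_corner_free_walk \<Gamma> m u"
    and down: "\<And>F G. F \<in> \<Gamma> \<Longrightarrow> G \<subseteq> F \<Longrightarrow> G \<in> \<Gamma>"
    and "i < j" "j < m" "{u i, u j} \<in> \<Gamma>"
  shows "j = Suc i \<or> (i = 0 \<and> j = m - 1)"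
  using assms(3-)
proof (induction j rule: less_induct)
  case (less j)
  have walk: "corner_free_walk \<Gamma> m u" using min unfolding minimal_corner_free_walk_def by simp
  show ?case
  proof (rule ccontr)
    assume trivial: "\<not> (j = Suc i \<or> (i = 0 \<and> j = m - 1))"
    then have far: "Suc i < j" and shorter: "Suc (j - i) < m" using less.prems by auto
    have face: "{u (j - 1), u j, u i} \<in> \<Gamma>"
    proof (rule ccontr)
      assume "{u (j - 1), u j, u i} \<notin> \<Gamma>"
      then have "corner_free_walk \<Gamma> (Suc (j - i)) (\<lambda>k. if k \<le> j - i then u (i + k) else u i)"
        using corner_free_walk_shortcut[OF walk far] less.prems minimal_walk_distinct[OF min]
        by blast
      then show False using min shorter unfolding minimal_corner_free_walk_def by fastforce
    qed
    show False
    proof (cases "j - 1 = Suc i")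
      case True
      then have "j = Suc (Suc i)" using far by simp
      then have "{u (j - 1), u j, u i} = {u (Suc i - 1), u (Suc i), u (Suc (Suc i))}"
        by (auto simp: insert_commute)
      then show False using face walk far less.prems unfolding corner_free_walk_def
        by (metis Suc_lessD order.strict_trans zero_less_Suc)
    next
      case False
      have "{u i, u (j - 1)} \<in> \<Gamma>" using down[OF face] by auto
      then have "j - 1 = Suc i \<or> (i = 0 \<and> j - 1 = m - 1)"
        using less.IH[of "j - 1"] far less.prems by auto
      then show False using False less.prems by auto
    qed
  qed
qed

text \<open>Consequently every face containing the first edge {u 0, u 1} and a further vertex
  of the walk would contain the forbidden corner {u 0, u 1, u 2}.\<close>
lemma minimal_walk_first_edge_free:
  assumes min: "minimal_corner_free_walk \<Gamma> m u"
    and down: "\<And>F G. F \<in> \<Gamma> \<Longrightarrow> G \<subseteq> F \<Longrightarrow> G \<in> \<Gamma>"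
    and face: "{u 0, u 1, x} \<in> \<Gamma>" and x: "x \<in> u ` {..<m}"
  shows "x \<in> {u 0, u 1}"
proof (rule ccontr)
  assume new: "x \<notin> {u 0, u 1}"
  obtain c where c: "c < m" "x = u c" using x by auto
  moreover have "c \<noteq> 0" "c \<noteq> 1" using new c by fastforce+
  ultimately have "1 < c" by linarith
  moreover have "{u 1, u c} \<in> \<Gamma>" using down[OF face] c by auto
  ultimately have "c = 2" using minimal_walk_chord[of \<Gamma> m u 1 c] min down c by auto
  moreover have "{u (1 - 1), u 1, u (Suc 1)} \<notin> \<Gamma>"
    using min c \<open>1 < c\<close> unfolding minimal_corner_free_walk_def corner_free_walk_def by auto
  ultimately show False using face c by (simp add: numeral_2_eq_2)
qed

section \<open>The cycle of a closed walk and non-vanishing homology\<close>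

definition walk_chain :: "nat \<Rightarrow> (nat \<Rightarrow> 'a::linorder) \<Rightarrow> 'a set \<Rightarrow> 'k::field" where
  "walk_chain m u e =
     (\<Sum>k<m. if e = {u k, u (Suc k)} then (if u (Suc k) = Max e then 1 else -1) else 0)"

lemma walk_chain_support:
  assumes "walk_chain m u e \<noteq> 0"
  shows "\<exists>k<m. e = {u k, u (Suc k)}"
  using assms unfolding walk_chain_def by (auto intro: ccontr sum.neutral)

text \<open>The chain of a closed walk is a cycle: its boundary at x telescopes to
  [x = u m] - [x = u 0] = 0.\<close>
lemma walk_chain_is_cycle:
  fixes u :: "nat \<Rightarrow> 'a::linorder"
  assumes finK: "finite K" and edges: "\<And>k. k < m \<Longrightarrow> {u k, u (Suc k)} \<in> K"
    and steps: "\<And>k. k < m \<Longrightarrow> u k \<noteq> u (Suc k)" and closed: "u m = u 0"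
  shows "bd1 K (walk_chain m u :: 'a set \<Rightarrow> 'k::field) x = 0"
proof -
  define A where "A = {e\<in>K. card e = 2 \<and> x \<in> e}"
  define orient :: "'a set \<Rightarrow> 'k" where "orient e = (if x = Max e then 1 else -1)" for e
  define hit :: "nat \<Rightarrow> 'k" where "hit k = (if x = u k then 1 else 0)" for k
  have "bd1 K (walk_chain m u) x =
      (\<Sum>e\<in>A. \<Sum>k<m. if e = {u k, u (Suc k)} then orient e * (if u (Suc k) = Max e then 1 else -1) else 0)"
    unfolding bd1_def walk_chain_def A_def orient_def sum_distrib_left by (intro sum.cong) auto
  also have "\<dots> = (\<Sum>k<m. \<Sum>e\<in>A. if e = {u k, u (Suc k)}
                      then orient e * (if u (Suc k) = Max e then 1 else -1) else 0)"
    by (rule sum.swap)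
  also have "\<dots> = (\<Sum>k<m. hit (Suc k) - hit k)"
  proof (rule sum.cong[OF refl])
    fix k assume "k \<in> {..<m}"
    then have "{u k, u (Suc k)} \<in> K" "u k \<noteq> u (Suc k)" using edges steps by auto
    moreover have "finite A" using finK unfolding A_def by simp
    ultimately show "(\<Sum>e\<in>A. if e = {u k, u (Suc k)}
                       then orient e * (if u (Suc k) = Max e then 1 else -1) else 0) = hit (Suc k) - hit k"
      unfolding A_def orient_def hit_def by (auto simp: sum.delta' max_def)
  qed
  also have "\<dots> = hit m - hit 0" by (rule sum_lessThan_telescope)
  also have "\<dots> = 0" using closed unfolding hit_def by simp
  finally show ?thesis .
qed

text \<open>On a walk with distinct vertices the first edge is traversed only once, so the
  chain has coefficient +1 or -1 there.\<close>
lemma walk_chain_first_edge: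
  assumes "3 \<le> m" and distinct: "\<And>i j. i < j \<Longrightarrow> j < m \<Longrightarrow> u i \<noteq> u j"
  shows "walk_chain m u {u 0, u 1} \<noteq> (0::'k::field)"
proof -
  have only_first: "k = 0" if "k < m" "{u k, u (Suc k)} = {u 0, u 1}" for k
  proof (rule ccontr)
    assume "k \<noteq> 0"
    then have "u k = u 1" using that distinct[of 0 k] by auto
    then have "\<not> 1 < k" using that distinct[of 1 k] by auto
    then have "k = 1" using \<open>k \<noteq> 0\<close> by linarith
    moreover have "u (Suc k) \<in> {u 0, u 1}" using that(2) by blast
    ultimately show False using that distinct[of 0 2] distinct[of 1 2] \<open>3 \<le> m\<close>
      by (auto simp: numeral_2_eq_2)
  qed
  have "walk_chain m u {u 0, u 1} =
      (\<Sum>k<m. if k = 0 then (if u 1 = Max {u 0, u 1} then 1 else -1) else (0::'k))"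
    unfolding walk_chain_def by (intro sum.cong refl) (use only_first in auto)
  also have "\<dots> = (if u 1 = Max {u 0, u 1} then 1 else -1)" using \<open>3 \<le> m\<close> by simp
  finally show ?thesis by simp
qed

text \<open>A criterion for H_1 <> 0: a 1-cycle with non-zero coefficient on an edge that lies
  in no triangle cannot be a boundary, since every boundary vanishes on such an edge.\<close>
lemma H1_nonzeroI:
  fixes z :: "'a::linorder set \<Rightarrow> 'k::field"
  assumes supp: "\<And>e. z e \<noteq> 0 \<Longrightarrow> e \<in> K \<and> card e = 2" and cycle: "\<And>x. bd1 K z x = 0"
    and e: "e \<in> K" "card e = 2" "z e \<noteq> 0"
    and free: "\<And>t. t \<in> K \<Longrightarrow> card t = 3 \<Longrightarrow> \<not> e \<subseteq> t"
  shows "H1_nonzero TYPE('k) K"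
proof -
  have "bd2 K c e = 0" for c :: "'a set \<Rightarrow> 'k"
    unfolding bd2_def using free by (auto intro: sum.neutral)
  then show ?thesis unfolding H1_nonzero_def using supp cycle e by metis
qed

lemma minimal_walk_H1_nonzero:
  fixes \<Gamma> :: "'a::linorder set set"
  assumes sc: "simplicial_complex V \<Gamma>" and min: "minimal_corner_free_walk \<Gamma> m u"
  shows "H1_nonzero TYPE('k::field) (induced \<Gamma> (u ` {..<m}))"
proof -
  define W where "W = u ` {..<m}"
  define K where "K = induced \<Gamma> W"
  have walk: "corner_free_walk \<Gamma> m u" using min unfolding minimal_corner_free_walk_def by simp
  then have m3: "3 \<le> m" and closed: "u m = u 0"
    and steps: "\<And>k. k < m \<Longrightarrow> {u k, u (Suc k)} \<in> \<Gamma> \<and> u k \<noteq> u (Suc k)"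
    unfolding corner_free_walk_def by auto
  have down: "\<And>F G. F \<in> \<Gamma> \<Longrightarrow> G \<subseteq> F \<Longrightarrow> G \<in> \<Gamma>"
    using sc unfolding simplicial_complex_def by blast
  have "finite \<Gamma>" using sc finite_subset[of \<Gamma> "Pow V"] unfolding simplicial_complex_def by auto
  then have finK: "finite K" unfolding K_def induced_def by simp
  have onW: "u k \<in> W" if "k \<le> m" for k
    using that closed m3 unfolding W_def by (cases "k = m") (auto intro: image_eqI[of _ _ 0])
  have edges: "{u k, u (Suc k)} \<in> K \<and> card {u k, u (Suc k)} = 2" if "k < m" for k
    using steps[OF that] onW[of k] onW[of "Suc k"] that unfolding K_def induced_def by auto
  have free: "\<not> {u 0, u 1} \<subseteq> t" if "t \<in> K" "card t = 3" for t
  proof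
    assume sub: "{u 0, u 1} \<subseteq> t"
    have "\<not> t \<subseteq> {u 0, u 1}"
    proof
      assume "t \<subseteq> {u 0, u 1}"
      then have "card t \<le> card {u 0, u 1}" by (rule card_mono[rotated]) simp
      also have "\<dots> \<le> 2" by (simp add: card_insert_if)
      finally show False using that by simp
    qed
    then obtain x where x: "x \<in> t" "x \<notin> {u 0, u 1}" by blast
    have "{u 0, u 1, x} \<in> \<Gamma>" using down[of t] that sub x unfolding K_def induced_def by auto
    moreover have "x \<in> W" using that x unfolding K_def induced_def by auto
    ultimately have "x \<in> {u 0, u 1}"
      using minimal_walk_first_edge_free[of \<Gamma> m u x] min down unfolding W_def by blast
    then show False using x by blast
  qed
  have "H1_nonzero TYPE('k) K"
  proof (rule H1_nonzeroI)
    show "walk_chain m u e \<noteq> (0::'k) \<Longrightarrow> e \<in> K \<and> card e = 2" for e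
      using walk_chain_support edges by blast
    show "bd1 K (walk_chain m u :: 'a set \<Rightarrow> 'k) x = 0" for x
      using walk_chain_is_cycle[OF finK] edges steps closed by blast
    show "walk_chain m u {u 0, u 1} \<noteq> (0::'k)"
      using walk_chain_first_edge m3 minimal_walk_distinct[OF min] by blast
  qed (use edges[of 0] m3 free in auto)
  then show ?thesis unfolding K_def W_def .
qed

section \<open>From the cyclic sequence to the girth bound\<close>

lemma mod_Suc_pred:
  assumes "0 < (r::nat)"
  shows "(Suc n mod r + r - 1) mod r = n mod r"
  using assms mod_Suc by auto

text \<open>Rotating the cyclic sequence so that its unique possible triangular corner is at
  position 0 yields a corner-free walk of length r.\<close>
lemma cyclic_sequence_corner_free_walk:
  assumes r3: "r \<ge> 3"
    and edges: "\<forall>i<r. {v i, v ((i + 1) mod r)} \<in> \<Gamma> \<and> card {v i, v ((i + 1) mod r)} = 2"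
    and corners: "card {i. i < r \<and> {v ((i + r - 1) mod r), v i, v ((i + 1) mod r)} \<in> \<Gamma>} \<le> 1"
  obtains w where "corner_free_walk \<Gamma> r w"
proof -
  define S where "S = {i. i < r \<and> {v ((i + r - 1) mod r), v i, v ((i + 1) mod r)} \<in> \<Gamma>}"
  obtain p where p: "p < r" "S \<subseteq> {p}"
  proof (cases "S = {}")
    case True then show ?thesis using that[of 0] r3 by simp
  next
    case False
    have "finite S" unfolding S_def by simp
    then obtain p where "S = {p}" using False corners card_le_Suc0_iff_eq[of S]
      unfolding S_def[symmetric] by auto
    then show ?thesis using that[of p] unfolding S_def by auto
  qed
  define w where "w k = v ((k + p) mod r)" for k
  have succ: "w (Suc k) = v (((k + p) mod r + 1) mod r)" for k
    unfolding w_def by (simp add: mod_Suc_eq)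
  have pred: "w k = v ((((k + 1) + p) mod r + r - 1) mod r)" for k
    unfolding w_def using r3 mod_Suc_pred[of r "k + p"] by simp
  have "corner_free_walk \<Gamma> r w"
    unfolding corner_free_walk_def
  proof (intro conjI allI impI)
    fix k assume "k < r"
    have "(k + p) mod r < r" using r3 by simp
    then show "{w k, w (Suc k)} \<in> \<Gamma>" "w k \<noteq> w (Suc k)"
      using edges unfolding succ by (auto simp: w_def card_insert_if split: if_splits)
  next
    fix k assume k: "0 < k \<and> k < r"
    define q where "q = (k + p) mod r"
    have "q \<noteq> p"
    proof (cases "k + p < r")
      case False
      moreover have "k + p - r < p" using k False by linarith
      ultimately have "q = k + p - r" unfolding q_def using p by (simp add: le_mod_geq)
      then show ?thesis using \<open>k + p - r < p\<close> by simp
    qed (use k in \<open>simp add: q_def\<close>)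
    then have "q \<notin> S" using p by auto
    moreover have "{w (k - 1), w k, w (Suc k)} = {v ((q + r - 1) mod r), v q, v ((q + 1) mod r)}"
      using pred[of "k - 1"] succ[of k] k unfolding q_def w_def by simp
    moreover have "q < r" using r3 unfolding q_def by simp
    ultimately show "{w (k - 1), w k, w (Suc k)} \<notin> \<Gamma>" unfolding S_def by auto
  qed (use r3 in \<open>simp_all add: w_def\<close>)
  then show ?thesis using that by blast
qed

lemma gr1_le_card:
  assumes "W \<subseteq> V" "F \<in> \<Gamma>" "H1_nonzero k (induced (link \<Gamma> F) W)"
  shows "gr1 k V \<Gamma> \<le> enat (card W)"
  unfolding gr1_def using assms by (blast intro: Inf_lower)

lemma link_empty: "link \<Gamma> {} = \<Gamma>"
  unfolding link_def by auto

theorem mainTheorem4: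
  fixes V :: "'a::linorder set" and \<Gamma> :: "'a set set" and r :: nat and v :: "nat \<Rightarrow> 'a"
  assumes "simplicial_complex V \<Gamma>"
    and "r \<ge> 3"
    and "\<forall>i<r. v i \<in> V"
    and "\<forall>i<r. {v i, v ((i + 1) mod r)} \<in> \<Gamma> \<and> card {v i, v ((i + 1) mod r)} = 2"
    and "card {i. i < r \<and> {v ((i + r - 1) mod r), v i, v ((i + 1) mod r)} \<in> \<Gamma>} \<le> 1"
  shows "gr1 TYPE('k::field) V \<Gamma> \<le> enat r"
proof -
  obtain w where "corner_free_walk \<Gamma> r w"
    using cyclic_sequence_corner_free_walk[OF assms(2,4,5)] .
  then obtain m u where m: "m \<le> r" and min: "minimal_corner_free_walk \<Gamma> m u"
    by (rule minimal_corner_free_walk_exists)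
  define W where "W = u ` {..<m}"
  have "W \<subseteq> V"
    using min assms(1) unfolding W_def minimal_corner_free_walk_def corner_free_walk_def
      simplicial_complex_def by blast
  moreover have "{} \<in> \<Gamma>"
  proof -
    have "{v 0} \<in> \<Gamma>" using assms(1-3) unfolding simplicial_complex_def by simp
    then show ?thesis using assms(1) unfolding simplicial_complex_def by blast
  qed
  moreover have "H1_nonzero TYPE('k) (induced (link \<Gamma> {}) W)"
    using minimal_walk_H1_nonzero[OF assms(1) min] unfolding W_def link_empty .
  ultimately have "gr1 TYPE('k) V \<Gamma> \<le> enat (card W)" by (rule gr1_le_card)
  also have "card W \<le> r" using card_image_le[of "{..<m}" u] m unfolding W_def by simp
  finally show ?thesis by simp
qed

end
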